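(* Let $q$ be a primitive $2d$-th root of unity with $d\ge2$ (and $q\neq\pm1,\pm i$). Then the subalgebra $H_{\{1\}}^{Inv}$ of invariant elements of $H_{\{1\}}$ is spanned (equivalently, generated as an algebra) by the monomials $x_1^{kd}y_1^{k'd}$ with $k,k'\in\mathbb N_0$ and $4\mid(k-k')$.
   Context: Fix a square root $q^{1/2}$ of $q$. $H_{\{1\}}$ is the unital $\mathbb C$-algebra generated by $x_1,y_1$ with relation $x_1y_1=qy_1x_1$. $U_q(gl(2,\mathbb R))$, generated by $E,F,K^{\pm1},L^{\pm1}$, acts on it by $L1=K1=1$, $E1=F1=0$, $Lx_1=q^{1/2}x_1$, $Ly_1=q^{1/2}y_1$, $Kx_1=q^{-1/2}x_1$, $Ky_1=q^{1/2}y_1$, $Ex_1=q^{1/2}y_1$, $Ey_1=0$, $Fx_1=0$, $Fy_1=q^{-1/2}x_1$, extended by $K(ab)=K(a)K(b)$, $L(ab)=L(a)L(b)$, $E(ab)=E(a)K(b)+K^{-1}(a)E(b)$, $F(ab)=F(a)K(b)+K^{-1}(a)F(b)$. An element $a$ is an invariant element of degree $r$ if $Ea=Fa=0$, $Ka=a$, $La=q^{r/2}a$; $H_{\{1\}}^{Inv}$ is the subalgebra spanned by all invariant elements. *)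

theory Defs
  imports Complex_Main "HOL-Library.Poly_Mapping"
begin

text \<open>The quantum plane H_{1}: elements are finite linear combinations of the
PBW monomials x1^a y1^b, i.e. finitely supported maps (a,b) to coefficient.\<close>

type_synonym qplane = "(nat \<times> nat) \<Rightarrow>\<^sub>0 complex"

definition mon :: "nat \<Rightarrow> nat \<Rightarrow> qplane" where
  "mon a b = Poly_Mapping.single (a, b) 1"

definition qx :: qplane where "qx = mon 1 0"
definition qy :: qplane where "qy = mon 0 1"
definition qone :: qplane where "qone = mon 0 0"

definition smul :: "complex \<Rightarrow> qplane \<Rightarrow> qplane" where
  "smul c f = Poly_Mapping.map (\<lambda>z. c * z) f"

text \<open>Multiplication: from x1 y1 = q y1 x1 we get y1^b x1^c = q^(-bc) x1^c y1^b, hence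
  (x1^a y1^b)(x1^c y1^e) = q^(-bc) x1^(a+c) y1^(b+e).\<close>
definition qmult :: "complex \<Rightarrow> qplane \<Rightarrow> qplane \<Rightarrow> qplane" where
  "qmult q f g = (\<Sum>(a, b)\<in>Poly_Mapping.keys f. \<Sum>(c, e)\<in>Poly_Mapping.keys g.
      Poly_Mapping.single (a + c, b + e)
        (Poly_Mapping.lookup f (a, b) * Poly_Mapping.lookup g (c, e) * inverse q ^ (b * c)))"

definition is_linear :: "(qplane \<Rightarrow> qplane) \<Rightarrow> bool" where
  "is_linear T \<longleftrightarrow> (\<forall>f g. T (f + g) = T f + T g) \<and> (\<forall>c f. T (smul c f) = smul c (T f))"

definition lin_span :: "qplane set \<Rightarrow> qplane set" where
  "lin_span S = {f. \<exists>F c. finite F \<and> F \<subseteq> S \<and> f = (\<Sum>v\<in>F. smul (c v) v)}"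

text \<open>The U_q(gl(2,R))-module structure on H_{1}, with s = q^(1/2) and Kinv the
  action of K^(-1).  The maps are linear, K,L,Kinv multiplicative, E,F twisted derivations.\<close>
definition Uq_action :: "complex \<Rightarrow> complex \<Rightarrow> (qplane \<Rightarrow> qplane) \<Rightarrow> (qplane \<Rightarrow> qplane)
    \<Rightarrow> (qplane \<Rightarrow> qplane) \<Rightarrow> (qplane \<Rightarrow> qplane) \<Rightarrow> (qplane \<Rightarrow> qplane) \<Rightarrow> bool" where
  "Uq_action q s E F K Kinv L \<longleftrightarrow>
     is_linear E \<and> is_linear F \<and> is_linear K \<and> is_linear Kinv \<and> is_linear L \<and>
     (\<forall>a. K (Kinv a) = a) \<and> (\<forall>a. Kinv (K a) = a) \<and>
     L qone = qone \<and> K qone = qone \<and> E qone = 0 \<and> F qone = 0 \<and>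
     L qx = smul s qx \<and> L qy = smul s qy \<and>
     K qx = smul (inverse s) qx \<and> K qy = smul s qy \<and>
     E qx = smul s qy \<and> E qy = 0 \<and> F qx = 0 \<and> F qy = smul (inverse s) qx \<and>
     (\<forall>a b. K (qmult q a b) = qmult q (K a) (K b)) \<and>
     (\<forall>a b. L (qmult q a b) = qmult q (L a) (L b)) \<and>
     (\<forall>a b. E (qmult q a b) = qmult q (E a) (K b) + qmult q (Kinv a) (E b)) \<and>
     (\<forall>a b. F (qmult q a b) = qmult q (F a) (K b) + qmult q (Kinv a) (F b))"

definition invariant_elem :: "complex \<Rightarrow> (qplane \<Rightarrow> qplane) \<Rightarrow> (qplane \<Rightarrow> qplane)
    \<Rightarrow> (qplane \<Rightarrow> qplane) \<Rightarrow> (qplane \<Rightarrow> qplane) \<Rightarrow> nat \<Rightarrow> qplane \<Rightarrow> bool" where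
  "invariant_elem s E F K L r a \<longleftrightarrow> E a = 0 \<and> F a = 0 \<and> K a = a \<and> L a = smul (s ^ r) a"

definition Inv_subalg :: "complex \<Rightarrow> (qplane \<Rightarrow> qplane) \<Rightarrow> (qplane \<Rightarrow> qplane)
    \<Rightarrow> (qplane \<Rightarrow> qplane) \<Rightarrow> (qplane \<Rightarrow> qplane) \<Rightarrow> qplane set" where
  "Inv_subalg s E F K L = lin_span {a. \<exists>r. invariant_elem s E F K L r a}"

end

theory Submission
  imports Defs
begin

text \<open>On the PBW monomials x^a y^b the action is explicit: K and L act diagonally, by
s^(b-a) and s^(a+b), while E and F send x^a y^b to multiples of x^(a-1) y^(b+1) and
x^(a+1) y^(b-1) whose coefficients are, up to units, the geometric sums
1 + s^4 + ... + s^(4(a-1)) and 1 + s^4 + ... + s^(4(b-1)).  As s is a primitive 4d-th root of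
unity, these vanish iff d divides a resp. b, and x^a y^b is fixed by K iff 4d divides a - b.
The shifts are injective wherever their coefficients are nonzero, so an element is invariant
only if every monomial of its support is.  Hence both sides are the space of elements
supported on the exponents (kd, k'd) with 4 dividing k - k'.\<close>

lemma lookup_smul [simp]: "Poly_Mapping.lookup (smul c f) k = c * Poly_Mapping.lookup f k"
  unfolding smul_def by (simp add: map.rep_eq when_def)

lemma smul_single [simp]: "smul c (Poly_Mapping.single k v) = Poly_Mapping.single k (c * v)"
  by (rule poly_mapping_eqI) (simp add: lookup_single when_def)

lemma qplane_eq_sum_single:
  "f = (\<Sum>p\<in>Poly_Mapping.keys f. Poly_Mapping.single p (Poly_Mapping.lookup f p))"
proof (rule poly_mapping_eqI)
  fix k
  have "Poly_Mapping.lookup (\<Sum>p\<in>Poly_Mapping.keys f. Poly_Mapping.single p (Poly_Mapping.lookup f p)) k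
      = (\<Sum>p\<in>Poly_Mapping.keys f. if p = k then Poly_Mapping.lookup f p else 0)"
    by (simp add: lookup_sum lookup_single when_def eq_commute)
  also have "\<dots> = Poly_Mapping.lookup f k"
    by (simp add: in_keys_iff)
  finally show "Poly_Mapping.lookup f k = Poly_Mapping.lookup
      (\<Sum>p\<in>Poly_Mapping.keys f. Poly_Mapping.single p (Poly_Mapping.lookup f p)) k" ..
qed

lemma is_linear_zero: "is_linear T \<Longrightarrow> T 0 = 0"
  unfolding is_linear_def by (metis add_cancel_right_right)

lemma is_linear_sum: "is_linear T \<Longrightarrow> T (\<Sum>p\<in>A. g p) = (\<Sum>p\<in>A. T (g p))"
  by (induction A rule: infinite_finite_induct) (auto simp: is_linear_zero is_linear_def)

lemma is_linear_single:
  assumes "is_linear T"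
  shows "T (Poly_Mapping.single p c) = smul c (T (Poly_Mapping.single p 1))"
proof -
  have "Poly_Mapping.single p c = smul c (Poly_Mapping.single p 1)"
    by simp
  then show ?thesis
    using assms by (metis is_linear_def)
qed

lemma is_linear_expand:
  assumes "is_linear T"
  shows "T f = (\<Sum>p\<in>Poly_Mapping.keys f.
                 smul (Poly_Mapping.lookup f p) (T (Poly_Mapping.single p 1)))"
proof -
  have "T f = T (\<Sum>p\<in>Poly_Mapping.keys f. smul (Poly_Mapping.lookup f p) (Poly_Mapping.single p 1))"
    by (subst qplane_eq_sum_single) simp
  then show ?thesis
    using assms by (simp add: is_linear_sum is_linear_def del: smul_single)
qed

lemma lookup_weighted_shift:
  assumes "is_linear T"
    and T_mon: "\<And>a b. T (mon a b) = Poly_Mapping.single (\<sigma> a b) (c a b)"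
    and inj: "\<And>a b a' b'. c a b \<noteq> 0 \<Longrightarrow> c a' b' \<noteq> 0 \<Longrightarrow> \<sigma> a b = \<sigma> a' b' \<Longrightarrow> (a, b) = (a', b')"
    and "c a b \<noteq> 0"
  shows "Poly_Mapping.lookup (T f) (\<sigma> a b) = Poly_Mapping.lookup f (a, b) * c a b"
proof -
  have T_single: "T (Poly_Mapping.single p 1) = Poly_Mapping.single (case_prod \<sigma> p) (case_prod c p)" for p
    using T_mon[of "fst p" "snd p"] by (simp add: mon_def split_beta)
  have "Poly_Mapping.lookup (T f) (\<sigma> a b) = (\<Sum>p\<in>Poly_Mapping.keys f.
      if case_prod \<sigma> p = \<sigma> a b then Poly_Mapping.lookup f p * case_prod c p else 0)"
    by (subst is_linear_expand[OF assms(1)]) (simp add: T_single lookup_sum lookup_single when_def)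
  also have "\<dots> = (\<Sum>p\<in>Poly_Mapping.keys f.
      if p = (a, b) then Poly_Mapping.lookup f p * case_prod c p else 0)"
  proof (rule sum.cong)
    fix p assume "p \<in> Poly_Mapping.keys f"
    obtain a' b' where p: "p = (a', b')"
      by fastforce
    show "(if case_prod \<sigma> p = \<sigma> a b then Poly_Mapping.lookup f p * case_prod c p else 0)
        = (if p = (a, b) then Poly_Mapping.lookup f p * case_prod c p else 0)"
      using inj[of a' b' a b] \<open>c a b \<noteq> 0\<close> by (auto simp: p)
  qed simp
  also have "\<dots> = Poly_Mapping.lookup f (a, b) * c a b"
    by (simp add: in_keys_iff)
  finally show ?thesis .
qed

lemma weighted_shift_kernel:
  assumes "is_linear T"
    and "\<And>a b. T (mon a b) = Poly_Mapping.single (\<sigma> a b) (c a b)"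
    and "\<And>a b a' b'. c a b \<noteq> 0 \<Longrightarrow> c a' b' \<noteq> 0 \<Longrightarrow> \<sigma> a b = \<sigma> a' b' \<Longrightarrow> (a, b) = (a', b')"
    and "T f = 0" and "(a, b) \<in> Poly_Mapping.keys f"
  shows "c a b = 0"
proof (rule ccontr)
  assume c: "c a b \<noteq> 0"
  have "Poly_Mapping.lookup f (a, b) * c a b = Poly_Mapping.lookup (T f) (\<sigma> a b)"
    by (rule lookup_weighted_shift[OF assms(1-3) c, symmetric])
  also have "\<dots> = 0"
    using assms(4) by simp
  finally show False
    using c assms(5) by (simp add: in_keys_iff)
qed

lemma lin_span_eq_supported:
  fixes S :: "qplane set"
  assumes keys_S: "\<And>v. v \<in> S \<Longrightarrow> Poly_Mapping.keys v \<subseteq> P"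
    and single_S: "\<And>p. p \<in> P \<Longrightarrow> Poly_Mapping.single p 1 \<in> S"
  shows "lin_span S = {f. Poly_Mapping.keys f \<subseteq> P}"
proof (intro set_eqI iffI CollectI)
  fix f :: qplane assume "f \<in> lin_span S"
  then obtain G c where G: "G \<subseteq> S" and f: "f = (\<Sum>v\<in>G. smul (c v) v)"
    unfolding lin_span_def by blast
  have "Poly_Mapping.keys f \<subseteq> (\<Union>v\<in>G. Poly_Mapping.keys (smul (c v) v))"
    unfolding f by (rule keys_sum)
  also have "\<dots> \<subseteq> P"
    using G keys_S by (fastforce simp: in_keys_iff)
  finally show "Poly_Mapping.keys f \<subseteq> P" .
next
  fix f :: qplane assume f_P: "f \<in> {f. Poly_Mapping.keys f \<subseteq> P}"
  define \<mu> :: "nat \<times> nat \<Rightarrow> qplane" where "\<mu> p = Poly_Mapping.single p 1" for p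
  have inj_\<mu>: "inj \<mu>"
    by (rule injI) (metis \<mu>_def lookup_single_eq lookup_single_not_eq zero_neq_one)
  define c :: "qplane \<Rightarrow> complex" where "c v = Poly_Mapping.lookup f (inv \<mu> v)" for v
  have "f = (\<Sum>p\<in>Poly_Mapping.keys f. smul (c (\<mu> p)) (\<mu> p))"
    by (subst qplane_eq_sum_single) (simp add: c_def inv_f_f[OF inj_\<mu>], simp add: \<mu>_def)
  also have "\<dots> = (\<Sum>v\<in>\<mu> ` Poly_Mapping.keys f. smul (c v) v)"
    by (simp add: sum.reindex inj_on_subset[OF inj_\<mu>])
  finally have f_sum: "f = (\<Sum>v\<in>\<mu> ` Poly_Mapping.keys f. smul (c v) v)" .
  have \<mu>_S: "\<mu> ` Poly_Mapping.keys f \<subseteq> S"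
    using f_P single_S by (auto simp: \<mu>_def)
  show "f \<in> lin_span S"
    unfolding lin_span_def
    by (intro CollectI exI conjI) (rule finite_imageI[OF finite_keys], rule \<mu>_S, rule f_sum)
qed

lemma qmult_single:
  "qmult q (Poly_Mapping.single (a, b) u) (Poly_Mapping.single (c, e) v)
     = Poly_Mapping.single (a + c, b + e) (u * v * inverse q ^ (b * c))"
  unfolding qmult_def by (cases "u = 0"; cases "v = 0") auto

lemma qmult_zero_left [simp]: "qmult q 0 g = 0"
  and qmult_zero_right [simp]: "qmult q f 0 = 0"
  by (simp_all add: qmult_def)

lemma mon_eq_qmult: "mon a b = qmult q (mon a 0) (mon 0 b)"
  by (simp add: mon_def qmult_single)

lemma mon_Suc_0: "mon (Suc a) 0 = qmult q (mon a 0) qx"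
  by (simp add: mon_def qx_def qmult_single)

lemma mon_0_Suc: "mon 0 (Suc b) = qmult q (mon 0 b) qy"
  by (simp add: mon_def qy_def qmult_single)

lemma multiplicative_map_mon:
  assumes mult: "\<And>f g. T (qmult q f g) = qmult q (T f) (T g)"
    and "T qone = qone"
    and T_x: "T qx = Poly_Mapping.single (1, 0) u" and T_y: "T qy = Poly_Mapping.single (0, 1) v"
  shows "T (mon a b) = Poly_Mapping.single (a, b) (u ^ a * v ^ b)"
proof -
  have T_1: "T (mon 0 0) = mon 0 0"
    using \<open>T qone = qone\<close> by (simp add: qone_def)
  have x_pow: "T (mon a 0) = Poly_Mapping.single (a, 0) (u ^ a)" for a
  proof (induction a)
    case (Suc a)
    show ?case
      by (simp add: mon_Suc_0[of _ q] mult Suc T_x qmult_single mult.commute)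
  qed (use T_1 in \<open>simp add: mon_def\<close>)
  have y_pow: "T (mon 0 b) = Poly_Mapping.single (0, b) (v ^ b)" for b
  proof (induction b)
    case (Suc b)
    show ?case
      by (simp add: mon_0_Suc[of _ q] mult Suc T_y qmult_single mult.commute)
  qed (use T_1 in \<open>simp add: mon_def\<close>)
  show ?thesis
    by (subst mon_eq_qmult[of _ _ q]) (simp add: mult x_pow y_pow qmult_single)
qed

definition primitive_root_of_unity :: "nat \<Rightarrow> 'a::monoid_mult \<Rightarrow> bool" where
  "primitive_root_of_unity n x \<longleftrightarrow> 0 < n \<and> x ^ n = 1 \<and> (\<forall>m. 0 < m \<and> m < n \<longrightarrow> x ^ m \<noteq> 1)"

lemma primitive_root_of_unity_power_eq_1_iff:
  assumes "primitive_root_of_unity n x"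
  shows "x ^ k = 1 \<longleftrightarrow> n dvd k"
proof
  assume "x ^ k = 1"
  moreover have "x ^ k = (x ^ n) ^ (k div n) * x ^ (k mod n)"
    by (simp flip: power_mult power_add)
  ultimately have "x ^ (k mod n) = 1"
    using assms by (simp add: primitive_root_of_unity_def)
  then show "n dvd k"
    using assms unfolding primitive_root_of_unity_def by (metis mod_less_divisor dvd_eq_mod_eq_0 neq0_conv)
next
  assume "n dvd k"
  then show "x ^ k = 1"
    using assms by (auto simp: primitive_root_of_unity_def power_mult)
qed

lemma primitive_root_of_unity_power_eq_power_iff:
  fixes x :: "'a::field"
  assumes "primitive_root_of_unity n x"
  shows "x ^ a = x ^ b \<longleftrightarrow> int n dvd int a - int b"
proof -
  have "x \<noteq> 0"
    using assms by (auto simp: primitive_root_of_unity_def power_0_left)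
  have "x ^ a = x ^ b \<longleftrightarrow> int n dvd int b - int a" if "a \<le> b" for a b
  proof -
    have "x ^ b = x ^ a * x ^ (b - a)"
      using that by (simp flip: power_add)
    then have "x ^ a = x ^ b \<longleftrightarrow> x ^ (b - a) = 1"
      using \<open>x \<noteq> 0\<close> by auto
    also have "\<dots> \<longleftrightarrow> int n dvd int b - int a"
      using that by (simp add: primitive_root_of_unity_power_eq_1_iff[OF assms] flip: of_nat_diff)
    finally show ?thesis .
  qed
  then show ?thesis
    by (metis dvd_diff_commute nat_le_linear)
qed

lemma primitive_root_of_unity_sqrt:
  fixes q s :: "'a::comm_monoid_mult"
  assumes "primitive_root_of_unity (2 * d) q" and "s ^ 2 = q"
  shows "primitive_root_of_unity (4 * d) s"
proof -
  have s_pow: "s ^ (2 * m) = q ^ m" for m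
    using \<open>s ^ 2 = q\<close> by (simp add: power_mult)
  have "0 < d"
    using assms(1) by (simp add: primitive_root_of_unity_def)
  have "s ^ m \<noteq> 1" if "0 < m" "m < 4 * d" for m
  proof
    assume "s ^ m = 1"
    then have "q ^ m = 1"
      by (metis s_pow power_mult power_one mult.commute)
    then have "2 * d dvd m"
      using assms(1) primitive_root_of_unity_power_eq_1_iff by blast
    then obtain k where m: "m = 2 * d * k"
      by (auto elim: dvdE)
    with that have "0 < k" and "2 * d * k < 2 * d * 2"
      by simp_all
    then have "m = 2 * d"
      using m by simp
    then have "q ^ d = 1"
      using \<open>s ^ m = 1\<close> s_pow by simp
    with \<open>0 < d\<close> assms(1) show False
      by (simp add: primitive_root_of_unity_def)
  qed
  moreover have "s ^ (4 * d) = 1"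
    using s_pow[of "2 * d"] assms(1) by (simp add: primitive_root_of_unity_def)
  ultimately show ?thesis
    using \<open>0 < d\<close> by (simp add: primitive_root_of_unity_def)
qed

text \<open>The coefficients of E (x^a) = e_coeff s a x^(a-1) y and F (y^b) = f_coeff s b x y^(b-1);
  the recursions are the twisted Leibniz rules applied to x^(a+1) = x^a x and y^(b+1) = y^b y.\<close>

fun e_coeff :: "'a::field \<Rightarrow> nat \<Rightarrow> 'a" where
  "e_coeff s 0 = 0"
| "e_coeff s (Suc a) = e_coeff s a / s ^ 3 + s ^ Suc a"

fun f_coeff :: "'a::field \<Rightarrow> nat \<Rightarrow> 'a" where
  "f_coeff s 0 = 0"
| "f_coeff s (Suc b) = f_coeff s b * s + 1 / s ^ (3 * b + 1)"

lemma e_coeff_closed_form: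
  assumes "s \<noteq> 0"
  shows "e_coeff s a * s ^ (3 * a) = s ^ 4 * (\<Sum>i<a. (s ^ 4) ^ i)"
proof (induction a)
  case (Suc a)
  have "s ^ Suc a * (s ^ 3 * s ^ (3 * a)) = s ^ (4 + 4 * a)"
    by (simp only: power_add[symmetric]) simp
  then have "e_coeff s (Suc a) * s ^ (3 * Suc a) = e_coeff s a * s ^ (3 * a) + s ^ 4 * (s ^ 4) ^ a"
    using assms by (simp add: power_add power_mult distrib_right)
  then show ?case
    using Suc by (simp add: distrib_left)
qed simp

lemma f_coeff_closed_form:
  assumes "s \<noteq> 0"
  shows "f_coeff s b * s ^ (3 * b) = s ^ 2 * (\<Sum>i<b. (s ^ 4) ^ i)"
proof (induction b)
  case (Suc b)
  have pow: "s ^ (3 * Suc b) = s ^ (3 * b + 1) * s ^ 2"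
    by (simp add: power_add eval_nat_numeral mult_ac)
  have "f_coeff s (Suc b) * s ^ (3 * Suc b)
      = f_coeff s b * (s * s ^ (3 * Suc b)) + s ^ (3 * Suc b) / s ^ (3 * b + 1)"
    by (simp only: f_coeff.simps distrib_right mult.assoc) simp
  also have "\<dots> = s ^ 4 * (f_coeff s b * s ^ (3 * b)) + s ^ 2"
    using assms by (simp only: pow) (simp add: eval_nat_numeral mult_ac)
  also have "\<dots> = s ^ 2 * (1 + s ^ 4 * (\<Sum>i<b. (s ^ 4) ^ i))"
    using Suc by (simp add: algebra_simps)
  also have "\<dots> = s ^ 2 * (\<Sum>i<Suc b. (s ^ 4) ^ i)"
    by (subst sum.lessThan_Suc_shift) (simp add: sum_distrib_left)
  finally show ?case .
qed simp

lemma geometric_sum_eq_0_iff: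
  fixes x :: "'a::field"
  assumes "x \<noteq> 1"
  shows "(\<Sum>i<n. x ^ i) = 0 \<longleftrightarrow> x ^ n = 1"
  using assms by (simp add: sum_gp_strict)

lemma e_coeff_eq_0_iff:
  assumes "s \<noteq> 0" and "s ^ 4 \<noteq> 1"
  shows "e_coeff s a = 0 \<longleftrightarrow> s ^ (4 * a) = 1"
proof -
  have "e_coeff s a = 0 \<longleftrightarrow> (\<Sum>i<a. (s ^ 4) ^ i) = 0"
    using e_coeff_closed_form[OF assms(1), of a] assms(1) by (metis mult_eq_0_iff power_not_zero)
  then show ?thesis
    using geometric_sum_eq_0_iff[OF assms(2)] by (simp add: power_mult)
qed

lemma f_coeff_eq_0_iff:
  assumes "s \<noteq> 0" and "s ^ 4 \<noteq> 1"
  shows "f_coeff s b = 0 \<longleftrightarrow> s ^ (4 * b) = 1"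
proof -
  have "f_coeff s b = 0 \<longleftrightarrow> (\<Sum>i<b. (s ^ 4) ^ i) = 0"
    using f_coeff_closed_form[OF assms(1), of b] assms(1) by (metis mult_eq_0_iff power_not_zero)
  then show ?thesis
    using geometric_sum_eq_0_iff[OF assms(2)] by (simp add: power_mult)
qed

locale Uq_quantum_plane =
  fixes q s :: complex and E F K Kinv L :: "qplane \<Rightarrow> qplane"
  assumes action: "Uq_action q s E F K Kinv L"
    and sqrt_q: "s ^ 2 = q"
begin

lemma linear_maps: "is_linear E" "is_linear F" "is_linear K" "is_linear Kinv" "is_linear L"
  using action by (simp_all add: Uq_action_def)

lemma K_mult: "K (qmult q f g) = qmult q (K f) (K g)"
  and L_mult: "L (qmult q f g) = qmult q (L f) (L g)"
  and E_mult: "E (qmult q f g) = qmult q (E f) (K g) + qmult q (Kinv f) (E g)"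
  and F_mult: "F (qmult q f g) = qmult q (F f) (K g) + qmult q (Kinv f) (F g)"
  and Kinv_K: "Kinv (K f) = f"
  using action by (simp_all add: Uq_action_def)

lemma action_on_generators:
  "K qone = qone" "L qone = qone" "E qone = 0" "F qone = 0"
  "K qx = Poly_Mapping.single (1, 0) (inverse s)" "K qy = Poly_Mapping.single (0, 1) s"
  "L qx = Poly_Mapping.single (1, 0) s" "L qy = Poly_Mapping.single (0, 1) s"
  "E qx = Poly_Mapping.single (0, 1) s" "E qy = 0"
  "F qx = 0" "F qy = Poly_Mapping.single (1, 0) (inverse s)"
  using action by (simp_all add: Uq_action_def qx_def qy_def mon_def)

lemma s_nonzero: "s \<noteq> 0"
proof
  assume "s = 0"
  then have "qx = Kinv 0"
    using Kinv_K[of qx] action_on_generators(5) by simp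
  also have "\<dots> = 0"
    using linear_maps(4) by (rule is_linear_zero)
  finally show False
    by (metis qx_def mon_def lookup_single_eq lookup_zero zero_neq_one)
qed

lemma K_mon: "K (mon a b) = Poly_Mapping.single (a, b) (inverse s ^ a * s ^ b)"
  by (rule multiplicative_map_mon[OF K_mult action_on_generators(1,5,6)])

lemma L_mon: "L (mon a b) = Poly_Mapping.single (a, b) (s ^ (a + b))"
  using multiplicative_map_mon[OF L_mult action_on_generators(2,7,8)] by (simp add: power_add)

lemma Kinv_mon: "Kinv (mon a b) = Poly_Mapping.single (a, b) (s ^ a * inverse s ^ b)"
proof -
  have "K (Poly_Mapping.single (a, b) (s ^ a * inverse s ^ b))
      = smul (s ^ a * inverse s ^ b) (K (mon a b))"
    unfolding mon_def by (rule is_linear_single[OF linear_maps(3)])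
  also have "\<dots> = mon a b"
    unfolding K_mon using s_nonzero by (simp add: mon_def field_simps)
  finally have "K (Poly_Mapping.single (a, b) (s ^ a * inverse s ^ b)) = mon a b" .
  then show ?thesis
    by (metis Kinv_K)
qed

lemma E_x_pow: "E (mon a 0) = Poly_Mapping.single (a - 1, 1) (e_coeff s a)"
proof (induction a)
  case 0
  show ?case
    using action_on_generators(3) by (simp add: qone_def)
next
  case (Suc a)
  have "E (mon (Suc a) 0)
      = qmult q (Poly_Mapping.single (a - 1, 1) (e_coeff s a)) (Poly_Mapping.single (1, 0) (inverse s))
        + qmult q (Poly_Mapping.single (a, 0) (s ^ a)) (Poly_Mapping.single (0, 1) s)"
    by (simp add: mon_Suc_0[of _ q] E_mult Suc action_on_generators Kinv_mon)
  also have "\<dots> = Poly_Mapping.single (a, 1) (e_coeff s a / s ^ 3 + s ^ Suc a)"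
  proof (cases "a = 0")
    case False
    then have "a - 1 + 1 = a"
      by simp
    moreover have "e_coeff s a * inverse s * inverse q = e_coeff s a / s ^ 3"
      using s_nonzero by (simp flip: sqrt_q add: field_simps power2_eq_square power3_eq_cube)
    ultimately show ?thesis
      by (simp add: qmult_single mult_ac flip: single_add)
  qed (simp add: qmult_single)
  finally show ?case
    by simp
qed

lemma E_y_pow: "E (mon 0 b) = 0"
proof (induction b)
  case 0
  show ?case
    using action_on_generators(3) by (simp add: qone_def)
next
  case (Suc b)
  show ?case
    by (simp add: mon_0_Suc[of _ q] E_mult Suc action_on_generators)
qed

lemma E_mon: "E (mon a b) = Poly_Mapping.single (a - 1, b + 1) (e_coeff s a * s ^ b)"
  by (subst mon_eq_qmult[of _ _ q]) (simp add: E_mult E_x_pow E_y_pow K_mon qmult_single)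

lemma F_x_pow: "F (mon a 0) = 0"
proof (induction a)
  case 0
  show ?case
    using action_on_generators(4) by (simp add: qone_def)
next
  case (Suc a)
  show ?case
    by (simp add: mon_Suc_0[of _ q] F_mult Suc action_on_generators)
qed

lemma F_y_pow: "F (mon 0 b) = Poly_Mapping.single (1, b - 1) (f_coeff s b)"
proof (induction b)
  case 0
  show ?case
    using action_on_generators(4) by (simp add: qone_def)
next
  case (Suc b)
  have "F (mon 0 (Suc b))
      = qmult q (Poly_Mapping.single (1, b - 1) (f_coeff s b)) (Poly_Mapping.single (0, 1) s)
        + qmult q (Poly_Mapping.single (0, b) (inverse s ^ b)) (Poly_Mapping.single (1, 0) (inverse s))"
    by (simp add: mon_0_Suc[of _ q] F_mult Suc action_on_generators Kinv_mon)
  also have "\<dots> = Poly_Mapping.single (1, b) (f_coeff s b * s + 1 / s ^ (3 * b + 1))"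
  proof -
    have "s ^ b * q ^ b = s ^ (3 * b)"
      by (simp flip: sqrt_q power_mult power_add)
    then have "inverse s ^ b * inverse s * inverse q ^ b = 1 / s ^ (3 * b + 1)"
      by (simp add: power_add field_simps flip: power_inverse)
    moreover have "qmult q (Poly_Mapping.single (1, b - 1) (f_coeff s b)) (Poly_Mapping.single (0, 1) s)
        = Poly_Mapping.single (1, b) (f_coeff s b * s)"
      by (cases "b = 0") (simp_all add: qmult_single)
    ultimately show ?thesis
      by (simp add: qmult_single flip: single_add)
  qed
  finally show ?case
    by simp
qed

lemma F_mon: "F (mon a b) = Poly_Mapping.single (a + 1, b - 1) (s ^ a * f_coeff s b)"
  by (subst mon_eq_qmult[of _ _ q]) (simp add: F_mult F_x_pow F_y_pow Kinv_mon qmult_single)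

lemma invariant_elem_mon:
  assumes "e_coeff s a = 0" and "f_coeff s b = 0" and "s ^ a = s ^ b"
  shows "invariant_elem s E F K L (a + b) (mon a b)"
proof -
  have "inverse s ^ a * s ^ b = 1"
    using assms(3) s_nonzero by (simp add: power_inverse)
  then show ?thesis
    unfolding invariant_elem_def E_mon F_mon K_mon L_mon using assms(1,2) by (simp add: mon_def)
qed

lemma invariant_elem_keys:
  assumes "invariant_elem s E F K L r f" and "(a, b) \<in> Poly_Mapping.keys f"
  shows "e_coeff s a = 0 \<and> f_coeff s b = 0 \<and> s ^ a = s ^ b"
proof (intro conjI)
  have "E f = 0" "F f = 0" "K f = f"
    using assms(1) by (simp_all add: invariant_elem_def)
  have "e_coeff s a * s ^ b = 0"
    by (rule weighted_shift_kernel[OF linear_maps(1) E_mon _ \<open>E f = 0\<close> assms(2)])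
      (metis diff_Suc_1 e_coeff.simps(1) mult_eq_0_iff not0_implies_Suc prod.inject add_right_cancel)
  then show "e_coeff s a = 0"
    using s_nonzero by simp
  have "s ^ a * f_coeff s b = 0"
    by (rule weighted_shift_kernel[OF linear_maps(2) F_mon _ \<open>F f = 0\<close> assms(2)])
      (metis diff_Suc_1 f_coeff.simps(1) mult_eq_0_iff not0_implies_Suc prod.inject add_right_cancel)
  then show "f_coeff s b = 0"
    using s_nonzero by simp
  have "Poly_Mapping.lookup (K f) (a, b) = Poly_Mapping.lookup f (a, b) * (inverse s ^ a * s ^ b)"
    by (rule lookup_weighted_shift[OF linear_maps(3) K_mon]) (use s_nonzero in simp_all)
  then have "inverse s ^ a * s ^ b = 1"
    using \<open>K f = f\<close> assms(2) by (simp add: in_keys_iff)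
  then show "s ^ a = s ^ b"
    using s_nonzero by (simp add: field_simps)
qed

end

definition invariant_exponents :: "nat \<Rightarrow> (nat \<times> nat) set" where
  "invariant_exponents d = {(k * d, k' * d) | k k'. (4::int) dvd int k - int k'}"

locale Uq_quantum_plane_root_of_unity = Uq_quantum_plane +
  fixes d :: nat
  assumes d_ge_2: "2 \<le> d" and q_primitive: "primitive_root_of_unity (2 * d) q"
begin

lemma s_primitive: "primitive_root_of_unity (4 * d) s"
  using q_primitive sqrt_q by (rule primitive_root_of_unity_sqrt)

lemma s_pow_4_ne_1: "s ^ 4 \<noteq> 1"
  using d_ge_2 by (auto simp: primitive_root_of_unity_power_eq_1_iff[OF s_primitive] dest: dvd_imp_le)

lemma e_coeff_eq_0_iff_dvd: "e_coeff s a = 0 \<longleftrightarrow> d dvd a"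
  using e_coeff_eq_0_iff[OF s_nonzero s_pow_4_ne_1]
  by (simp add: primitive_root_of_unity_power_eq_1_iff[OF s_primitive])

lemma f_coeff_eq_0_iff_dvd: "f_coeff s b = 0 \<longleftrightarrow> d dvd b"
  using f_coeff_eq_0_iff[OF s_nonzero s_pow_4_ne_1]
  by (simp add: primitive_root_of_unity_power_eq_1_iff[OF s_primitive])

lemma mem_invariant_exponents_iff:
  "(a, b) \<in> invariant_exponents d \<longleftrightarrow> e_coeff s a = 0 \<and> f_coeff s b = 0 \<and> s ^ a = s ^ b"
proof -
  have dvd_iff: "int (4 * d) dvd int (k * d) - int (k' * d) \<longleftrightarrow> 4 dvd int k - int k'" for k k'
  proof -
    have "int (4 * d) dvd int (k * d) - int (k' * d) \<longleftrightarrow> int d * 4 dvd int d * (int k - int k')"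
      by (simp add: algebra_simps)
    also have "\<dots> \<longleftrightarrow> 4 dvd int k - int k'"
      by (rule dvd_times_left_cancel_iff) (use d_ge_2 in simp)
    finally show ?thesis .
  qed
  have "e_coeff s a = 0 \<and> f_coeff s b = 0 \<and> s ^ a = s ^ b
      \<longleftrightarrow> d dvd a \<and> d dvd b \<and> int (4 * d) dvd int a - int b"
    by (simp add: e_coeff_eq_0_iff_dvd f_coeff_eq_0_iff_dvd
        primitive_root_of_unity_power_eq_power_iff[OF s_primitive])
  also have "\<dots> \<longleftrightarrow> (a, b) \<in> invariant_exponents d"
  proof
    assume "d dvd a \<and> d dvd b \<and> int (4 * d) dvd int a - int b"
    then obtain k k' where "a = k * d" "b = k' * d" "int (4 * d) dvd int a - int b"
      by (metis dvdE mult.commute)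
    then have "(a, b) = (k * d, k' * d)" "4 dvd int k - int k'"
      using dvd_iff by simp_all
    then show "(a, b) \<in> invariant_exponents d"
      unfolding invariant_exponents_def by blast
  next
    assume "(a, b) \<in> invariant_exponents d"
    then obtain k k' where "a = k * d" "b = k' * d" "4 dvd int k - int k'"
      unfolding invariant_exponents_def by blast
    then show "d dvd a \<and> d dvd b \<and> int (4 * d) dvd int a - int b"
      using dvd_iff by simp
  qed
  finally show ?thesis ..
qed

lemma Inv_subalg_eq_supported:
  "Inv_subalg s E F K L = {f. Poly_Mapping.keys f \<subseteq> invariant_exponents d}"
  unfolding Inv_subalg_def
proof (rule lin_span_eq_supported)
  fix f assume "f \<in> {a. \<exists>r. invariant_elem s E F K L r a}"
  then show "Poly_Mapping.keys f \<subseteq> invariant_exponents d"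
    using invariant_elem_keys mem_invariant_exponents_iff by auto
next
  fix p assume "p \<in> invariant_exponents d"
  then show "Poly_Mapping.single p 1 \<in> {a. \<exists>r. invariant_elem s E F K L r a}"
    using invariant_elem_mon mem_invariant_exponents_iff by (cases p) (auto simp: mon_def)
qed

end

theorem proposition5p4:
  fixes q s :: complex and d :: nat
    and E F K Kinv L :: "qplane \<Rightarrow> qplane"
  assumes "d \<ge> 2"
    and "q ^ (2 * d) = 1" and "\<forall>m. 0 < m \<and> m < 2 * d \<longrightarrow> q ^ m \<noteq> 1"
    and "q \<notin> {1, -1, \<i>, -\<i>}"
    and "s ^ 2 = q"
    and "Uq_action q s E F K Kinv L"
  shows "Inv_subalg s E F K L =
           lin_span {mon (k * d) (k' * d) | k k'. (4::int) dvd (int k - int k')}"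
proof -
  \<comment> \<open>The hypothesis excluding q = \<plusminus>1, \<plusminus>i is implied by primitivity and d \<ge> 2.\<close>
  interpret Uq_quantum_plane_root_of_unity q s E F K Kinv L d
    using assms by unfold_locales (auto simp: primitive_root_of_unity_def)
  have "lin_span {mon (k * d) (k' * d) | k k'. (4::int) dvd (int k - int k')}
      = {f. Poly_Mapping.keys f \<subseteq> invariant_exponents d}"
    by (rule lin_span_eq_supported) (fastforce simp: invariant_exponents_def mon_def)+
  then show ?thesis
    using Inv_subalg_eq_supported by simp
qed

end
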